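(* Let $(W,\omega^W)$ be a vertex operator algebra and $\omega'\in\operatorname{Sc}(W,\omega^W)$ with $Y(\omega',z)=\sum_nL'(n)z^{-n-2}$. Then $L^W(n)=L'(n)$ on $C_W(C_W(\langle\omega'\rangle))$ for all $n\ge -1$.
   Context: $Y(\omega^W,z)=\sum_nL^W(n)z^{-n-2}$. A semi-conformal vector $\omega'$ of $(W,\omega^W)$ is the conformal vector of a vertex operator subalgebra $(U,\omega')$ (possibly different conformal vector) with $\omega^W_n|_U=\omega'_n|_U$ for all $n\ge0$; $\operatorname{Sc}(W,\omega^W)$ is the set of these. $C_W(U)=\{v\in W:u_nv=0\ \forall u\in U,n\ge0\}$; $\langle\omega'\rangle$ is the vertex subalgebra generated by $\omega'$ and $\mathbf1$. *)

theory Defs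
  imports Complex_Main
begin

text \<open>A vertex algebra structure on a type 'v is given by a scalar
multiplication smul :: complex => 'v => 'v (making 'v a complex vector space)
and a mode map Y :: 'v => int => 'v => 'v, where Y u n v is u_n v, i.e.
Y(u,z) = sum_n u_n z^(-n-1).  L(n) = omega_(n+1).\<close>

definition fsum :: "(nat \<Rightarrow> 'v::comm_monoid_add) \<Rightarrow> 'v" where
  "fsum f = sum f {i. f i \<noteq> 0}"

definition sgn_pow :: "int \<Rightarrow> complex" where
  "sgn_pow r = (if even r then 1 else -1)"

definition is_VOA ::
  "(complex \<Rightarrow> 'v::ab_group_add \<Rightarrow> 'v) \<Rightarrow> ('v \<Rightarrow> int \<Rightarrow> 'v \<Rightarrow> 'v) \<Rightarrow> 'v \<Rightarrow> 'v \<Rightarrow> 'v set \<Rightarrow> bool"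
  where
  "is_VOA smul Y one \<omega> V \<longleftrightarrow>
     module.subspace smul V \<and> one \<in> V \<and> \<omega> \<in> V \<and>
     (\<forall>u\<in>V. \<forall>v\<in>V. \<forall>n. Y u n v \<in> V) \<and>
     (\<forall>u\<in>V. \<forall>v\<in>V. \<forall>w\<in>V. \<forall>a b n.
         Y (smul a u + smul b v) n w = smul a (Y u n w) + smul b (Y v n w) \<and>
         Y w n (smul a u + smul b v) = smul a (Y w n u) + smul b (Y w n v)) \<and>
     (\<forall>u\<in>V. \<forall>v\<in>V. \<exists>N. \<forall>n\<ge>N. Y u n v = 0) \<and>
     (\<forall>v\<in>V. \<forall>n. Y one n v = (if n = -1 then v else 0)) \<and>
     (\<forall>u\<in>V. Y u (-1) one = u \<and> (\<forall>n\<ge>0. Y u n one = 0)) \<and>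
     (\<forall>u\<in>V. \<forall>v\<in>V. \<forall>w\<in>V. \<forall>p q r.
        fsum (\<lambda>i. smul (of_int p gchoose i) (Y (Y u (r + int i) v) (p + q - int i) w))
        = fsum (\<lambda>i. smul ((-1) ^ i * (of_int r gchoose i))
             (Y u (p + r - int i) (Y v (q + int i) w)
              - smul (sgn_pow r) (Y v (q + r - int i) (Y u (p + int i) w))))) \<and>
     (\<exists>c::complex. \<forall>m n. \<forall>v\<in>V.
        Y \<omega> (m + 1) (Y \<omega> (n + 1) v) - Y \<omega> (n + 1) (Y \<omega> (m + 1) v)
        = smul (of_int (m - n)) (Y \<omega> (m + n + 1) v)
          + (if m + n = 0 then smul ((of_int m ^ 3 - of_int m) / 12 * c) v else 0)) \<and>
     (\<forall>u\<in>V. \<forall>v\<in>V. \<forall>n. Y (Y \<omega> 0 u) n v = smul (- of_int n) (Y u (n - 1) v)) \<and>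
     Y \<omega> 1 \<omega> = smul 2 \<omega> \<and>
     (\<forall>v\<in>V. \<exists>f :: int \<Rightarrow> 'v. finite {n. f n \<noteq> 0} \<and>
        (\<forall>n. f n \<in> V \<and> Y \<omega> 1 (f n) = smul (of_int n) (f n)) \<and>
        v = sum f {n. f n \<noteq> 0}) \<and>
     (\<forall>n::int. \<exists>B. finite B \<and> B \<subseteq> V \<and>
        {v\<in>V. Y \<omega> 1 v = smul (of_int n) v} \<subseteq> module.span smul B) \<and>
     (\<exists>N::int. \<forall>n<N. \<forall>v\<in>V. Y \<omega> 1 v = smul (of_int n) v \<longrightarrow> v = 0)"

definition Sc ::
  "(complex \<Rightarrow> 'v::ab_group_add \<Rightarrow> 'v) \<Rightarrow> ('v \<Rightarrow> int \<Rightarrow> 'v \<Rightarrow> 'v) \<Rightarrow> 'v \<Rightarrow> 'v \<Rightarrow> 'v set"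
  where
  "Sc smul Y one \<omega> = {\<omega>'. \<exists>U. is_VOA smul Y one \<omega>' U \<and>
       (\<forall>n\<ge>0. \<forall>v\<in>U. Y \<omega> n v = Y \<omega>' n v)}"

definition commutant :: "('v \<Rightarrow> int \<Rightarrow> 'v \<Rightarrow> 'v::zero) \<Rightarrow> 'v set \<Rightarrow> 'v set" where
  "commutant Y S = {v. \<forall>u\<in>S. \<forall>n\<ge>0. Y u n v = 0}"

definition gen_subalg ::
  "(complex \<Rightarrow> 'v::ab_group_add \<Rightarrow> 'v) \<Rightarrow> ('v \<Rightarrow> int \<Rightarrow> 'v \<Rightarrow> 'v) \<Rightarrow> 'v \<Rightarrow> 'v set \<Rightarrow> 'v set"
  where
  "gen_subalg smul Y one X = \<Inter> {S. module.subspace smul S \<and> one \<in> S \<and> X \<subseteq> S \<and>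
       (\<forall>u\<in>S. \<forall>v\<in>S. \<forall>n. Y u n v \<in> S)}"

end

theory Submission
  imports Defs
begin

text \<open>Skew symmetry (the Borcherds identity applied to the vacuum) turns
the agreement of \<open>\<omega>\<close> and \<open>\<omega>'\<close> on the subalgebra \<open>U\<close> of \<open>\<omega>'\<close> into
\<open>\<omega>'\<^sub>n \<omega> = \<omega>'\<^sub>n \<omega>'\<close> for \<open>n \<ge> 0\<close>, i.e. \<open>\<omega> - \<omega>' \<in> C\<^sub>W({\<omega>'})\<close>.
By the Borcherds identity with \<open>p = 0\<close>, the elements whose non-negative modes kill a
fixed vector form a vertex subalgebra, so \<open>C\<^sub>W({\<omega>'}) = C\<^sub>W(\<langle>\<omega>'\<rangle>)\<close>. Hence the
non-negative modes of \<open>\<omega> - \<omega>'\<close>, i.e. \<open>L\<^sup>W(n) - L'(n)\<close> for \<open>n \<ge> -1\<close>, vanish on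
\<open>C\<^sub>W(C\<^sub>W(\<langle>\<omega>'\<rangle>))\<close>.\<close>

lemma fsum_single:
  assumes "\<And>i. i \<noteq> 0 \<Longrightarrow> f i = 0"
  shows "fsum f = f 0"
proof -
  have "{i. f i \<noteq> 0} \<subseteq> {0}" using assms by auto
  then consider "{i. f i \<noteq> 0} = {}" | "{i. f i \<noteq> 0} = {0}" by blast
  then show ?thesis by cases (auto simp: fsum_def)
qed

lemma fsum_zero [simp]: "fsum (\<lambda>i. 0) = 0"
  by (simp add: fsum_def)

lemma sgn_pow_square: "sgn_pow r * sgn_pow r = 1"
  by (simp add: sgn_pow_def)

locale vertex_algebra = vector_space smul
  for smul :: "complex \<Rightarrow> 'v::ab_group_add \<Rightarrow> 'v" +
  fixes Y :: "'v \<Rightarrow> int \<Rightarrow> 'v \<Rightarrow> 'v" and one :: 'v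
  assumes Y_linear_left: "Y (smul a u + smul b v) n w = smul a (Y u n w) + smul b (Y v n w)"
    and Y_linear_right: "Y w n (smul a u + smul b v) = smul a (Y w n u) + smul b (Y w n v)"
    and vacuum_modes: "Y one n v = (if n = -1 then v else 0)"
    and creation: "Y u (-1) one = u" "n \<ge> 0 \<Longrightarrow> Y u n one = 0"
    and borcherds: "fsum (\<lambda>i. smul (of_int p gchoose i) (Y (Y u (r + int i) v) (p + q - int i) w))
        = fsum (\<lambda>i. smul ((-1) ^ i * (of_int r gchoose i))
             (Y u (p + r - int i) (Y v (q + int i) w)
              - smul (sgn_pow r) (Y v (q + r - int i) (Y u (p + int i) w))))"
begin

lemma Y_zero_right [simp]: "Y w n 0 = 0"
  using Y_linear_right[of w n 0 0 0 0] by simp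

lemma Y_add_left: "Y (u + v) n w = Y u n w + Y v n w"
  using Y_linear_left[of 1 u 1 v] by simp

lemma Y_diff_left: "Y (u - v) n w = Y u n w - Y v n w"
  using Y_linear_left[of 1 u "-1" v] by simp

lemma Y_diff_right: "Y w n (u - v) = Y w n u - Y w n v"
  using Y_linear_right[of w n 1 u "-1" v] by simp

lemma Y_scale_left: "Y (smul c u) n w = smul c (Y u n w)"
  using Y_linear_left[of c u 0] by simp

lemma borcherds_vacuum:
  "fsum (\<lambda>i. smul (of_int (-1) gchoose i) (Y (Y u (r + int i) v) (-1 + 0 - int i) one))
     = - smul (sgn_pow r) (Y v r u)"
proof -
  have "fsum (\<lambda>i. smul ((-1) ^ i * (of_int r gchoose i))
             (Y u (-1 + r - int i) (Y v (0 + int i) one)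
              - smul (sgn_pow r) (Y v (0 + r - int i) (Y u (-1 + int i) one))))
        = smul ((-1) ^ 0 * (of_int r gchoose 0))
             (Y u (-1 + r - int 0) (Y v (0 + int 0) one)
              - smul (sgn_pow r) (Y v (0 + r - int 0) (Y u (-1 + int 0) one)))"
    by (rule fsum_single) (simp add: creation(2))
  also have "\<dots> = - smul (sgn_pow r) (Y v r u)"
    by (simp add: creation)
  finally show ?thesis
    using borcherds[of "-1" u r v 0 one] by simp
qed

lemma mode_eq_by_skew_symmetry:
  assumes "\<And>i. Y u (r + int i) v = Y u' (r + int i) v"
  shows "Y v r u = Y v r u'"
proof -
  have "smul (sgn_pow r) (Y v r u) = smul (sgn_pow r) (Y v r u')"
    using borcherds_vacuum[of u r v] borcherds_vacuum[of u' r v] assms by simp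
  then have "smul (sgn_pow r * sgn_pow r) (Y v r u) = smul (sgn_pow r * sgn_pow r) (Y v r u')"
    by (metis scale_scale)
  then show ?thesis by (simp add: sgn_pow_square)
qed

definition annihilator :: "'v \<Rightarrow> 'v set" where
  "annihilator w = {x. \<forall>n\<ge>0. Y x n w = 0}"

lemma commutant_iff_subset_annihilator: "w \<in> commutant Y S \<longleftrightarrow> S \<subseteq> annihilator w"
  by (auto simp: commutant_def annihilator_def)

lemma subspace_annihilator: "subspace (annihilator w)"
  unfolding subspace_def annihilator_def
  using Y_linear_left[of 0 0 0 0] by (auto simp: Y_add_left Y_scale_left)

lemma one_in_annihilator: "one \<in> annihilator w"
  by (simp add: annihilator_def vacuum_modes)

lemma mode_in_annihilator:
  assumes a: "a \<in> annihilator w" and b: "b \<in> annihilator w"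
  shows "Y a r b \<in> annihilator w"
  unfolding annihilator_def
proof (intro CollectI allI impI)
  fix q :: int assume "q \<ge> 0"
  with a b have vanish: "Y b (q + int i) w = 0" "Y a (int i) w = 0" for i :: nat
    by (auto simp: annihilator_def)
  have "Y (Y a r b) q w
      = fsum (\<lambda>i. smul (of_int 0 gchoose i) (Y (Y a (r + int i) b) (0 + q - int i) w))"
    by (subst fsum_single) (auto simp: gbinomial_0_left)
  also have "\<dots> = 0"
    using borcherds[of 0 a r b q w] by (simp add: vanish)
  finally show "Y (Y a r b) q w = 0" .
qed

lemma commutant_gen_subalg: "commutant Y (gen_subalg smul Y one X) = commutant Y X"
proof
  show "commutant Y (gen_subalg smul Y one X) \<subseteq> commutant Y X"
    unfolding gen_subalg_def commutant_def by blast
  show "commutant Y X \<subseteq> commutant Y (gen_subalg smul Y one X)"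
  proof
    fix w assume "w \<in> commutant Y X"
    then have "annihilator w \<in> {S. subspace S \<and> one \<in> S \<and> X \<subseteq> S \<and> (\<forall>u\<in>S. \<forall>v\<in>S. \<forall>n. Y u n v \<in> S)}"
      using subspace_annihilator one_in_annihilator mode_in_annihilator
      by (simp add: commutant_iff_subset_annihilator)
    then have "gen_subalg smul Y one X \<subseteq> annihilator w"
      unfolding gen_subalg_def by (rule Inter_lower)
    then show "w \<in> commutant Y (gen_subalg smul Y one X)"
      by (simp add: commutant_iff_subset_annihilator)
  qed
qed

end

lemma is_VOA_UNIV_imp_vertex_algebra:
  assumes "vector_space smul" and "is_VOA smul Y one \<omega> UNIV"
  shows "vertex_algebra smul Y one"
  using assms unfolding vertex_algebra_def vertex_algebra_axioms_def is_VOA_def by simp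

lemma (in vertex_algebra) semi_conformal_difference_in_commutant:
  assumes "\<omega>' \<in> Sc smul Y one \<omega>"
  shows "\<omega> - \<omega>' \<in> commutant Y {\<omega>'}"
proof -
  obtain U where "is_VOA smul Y one \<omega>' U" and agree: "\<And>n v. n \<ge> 0 \<Longrightarrow> v \<in> U \<Longrightarrow> Y \<omega> n v = Y \<omega>' n v"
    using assms unfolding Sc_def by blast
  then have "\<omega>' \<in> U" by (simp add: is_VOA_def)
  then have "Y \<omega>' n \<omega> = Y \<omega>' n \<omega>'" if "n \<ge> 0" for n
    using that agree by (intro mode_eq_by_skew_symmetry) simp
  then show ?thesis by (simp add: commutant_def Y_diff_right)
qed

theorem proposition2p6:
  fixes smul :: "complex \<Rightarrow> 'v::ab_group_add \<Rightarrow> 'v"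
    and Y :: "'v \<Rightarrow> int \<Rightarrow> 'v \<Rightarrow> 'v"
    and one \<omega> \<omega>' :: 'v
  assumes "vector_space smul"
    and "is_VOA smul Y one \<omega> UNIV"
    and "\<omega>' \<in> Sc smul Y one \<omega>"
  shows "\<forall>n\<ge>-1. \<forall>v \<in> commutant Y (commutant Y (gen_subalg smul Y one {\<omega>'})).
           Y \<omega> (n + 1) v = Y \<omega>' (n + 1) v"
proof (intro allI impI ballI)
  interpret vertex_algebra smul Y one
    using assms(1,2) by (rule is_VOA_UNIV_imp_vertex_algebra)
  fix n :: int and v
  assume "n \<ge> -1" and "v \<in> commutant Y (commutant Y (gen_subalg smul Y one {\<omega>'}))"
  moreover have "\<omega> - \<omega>' \<in> commutant Y (gen_subalg smul Y one {\<omega>'})"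
    using semi_conformal_difference_in_commutant[OF assms(3)] by (simp add: commutant_gen_subalg)
  ultimately have "Y (\<omega> - \<omega>') (n + 1) v = 0"
    unfolding commutant_def by auto
  then show "Y \<omega> (n + 1) v = Y \<omega>' (n + 1) v"
    by (simp add: Y_diff_left)
qed

end
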